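(* Let $n_1,n_2,m_1,m_2$ be positive integers with $\gcd(n_1,n_2)=\gcd(m_1,m_2)=1$. If $f_1:\mathcal{D}(n_1)\to\mathcal{D}(m_1)$ and $f_2:\mathcal{D}(n_2)\to\mathcal{D}(m_2)$ are reducing, then so is $f_1f_2:\mathcal{D}(n_1n_2)\to\mathcal{D}(m_1m_2)$, defined by $(f_1f_2)(d_1d_2)=f_1(d_1)f_2(d_2)$ for $d_1\in\mathcal{D}(n_1)$, $d_2\in\mathcal{D}(n_2)$.
   Context: For a positive integer $n$, $\mathcal{D}(n)$ is the set of positive divisors of $n$, and $\lambda(n)$ is the least prime factor of $n$ if $n\ge2$, with $\lambda(1)=1$. For positive integers $m,n$, a function $f:\mathcal{D}(n)\to\mathcal{D}(m)$ is called reducing if for all $d,d'\in\mathcal{D}(n)$: (a) $f(d)\le d$; (b) $\frac{m/f(d)}{n/d}\le\min\{1,\ \lambda(m/f(d))/\lambda(n/d)\}$; (c) if $f(d)=2^if(d')$ for some $i\in\mathbb{Z}$, then $d=2^jd'$ for some $j\in\mathbb{Z}$. *)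

theory Defs
  imports Complex_Main "HOL-Computational_Algebra.Primes"
begin

definition divs :: "nat \<Rightarrow> nat set" where
  "divs n = {d. d dvd n}"

definition lpf :: "nat \<Rightarrow> nat" where
  "lpf n = (if n \<le> 1 then 1 else Min (prime_factors n))"

(* f : D(n) \<rightarrow> D(m) is reducing; f is given as a total function on nat,
   only its values on D(n) matter *)
definition reducing :: "(nat \<Rightarrow> nat) \<Rightarrow> nat \<Rightarrow> nat \<Rightarrow> bool" where
  "reducing f n m \<longleftrightarrow>
     (\<forall>d\<in>divs n. f d \<in> divs m) \<and>
     (\<forall>d\<in>divs n. f d \<le> d) \<and>
     (\<forall>d\<in>divs n.
        (real m / real (f d)) / (real n / real d)
          \<le> min 1 (real (lpf (m div f d)) / real (lpf (n div d)))) \<and>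
     (\<forall>d\<in>divs n. \<forall>d'\<in>divs n.
        (\<exists>i::int. real (f d) = 2 powi i * real (f d')) \<longrightarrow>
        (\<exists>j::int. real d = 2 powi j * real d'))"

end

theory Submission
  imports Defs
begin

(* Conditions (a) and (b) are multiplicative: with a = m/f(d) and b = n/d, condition (b) reads
   a <= b and a * lpf b <= b * lpf a, and the least prime factor of a product of two numbers
   greater than 1 is the smaller of their least prime factors.  For (c), one of m1, m2 is odd,
   say m2.  If f1(d1) f2(d2) and f1(d1') f2(d2') differ by a power of 2, then the odd factors
   f2(d2), f2(d2'), which are coprime to m1, coincide, and f1(d1), f1(d1') differ by a power
   of 2; condition (c) for f1 and f2 then gives the claim. *)

definition eq_up_to_pow2 :: "nat \<Rightarrow> nat \<Rightarrow> bool" where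
  "eq_up_to_pow2 x y \<longleftrightarrow> (\<exists>a b. 2 ^ a * x = 2 ^ b * y)"

lemma eq_up_to_pow2_refl [simp]: "eq_up_to_pow2 x x"
  unfolding eq_up_to_pow2_def by blast

lemma eq_up_to_pow2_mult:
  assumes "eq_up_to_pow2 x1 y1" "eq_up_to_pow2 x2 y2"
  shows "eq_up_to_pow2 (x1 * x2) (y1 * y2)"
proof -
  obtain a b c e where ab: "2 ^ a * x1 = 2 ^ b * y1" and ce: "2 ^ c * x2 = 2 ^ e * y2"
    using assms unfolding eq_up_to_pow2_def by blast
  have "2 ^ (a + c) * (x1 * x2) = (2 ^ a * x1) * (2 ^ c * x2)"
    by (simp add: power_add ac_simps)
  also have "\<dots> = 2 ^ (b + e) * (y1 * y2)"
    unfolding ab ce by (simp add: power_add ac_simps)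
  finally show ?thesis
    unfolding eq_up_to_pow2_def by blast
qed

lemma eq_up_to_pow2_iff_powi:
  "(\<exists>i::int. real x = 2 powi i * real y) \<longleftrightarrow> eq_up_to_pow2 x y"
proof
  assume "\<exists>i::int. real x = 2 powi i * real y"
  then obtain i :: int where i: "real x = 2 powi i * real y" by blast
  have "i = int (nat i) - int (nat (- i))" by simp
  then have "(2::real) powi i = 2 ^ nat i / 2 ^ nat (- i)"
    by (metis power_int_diff power_int_of_nat zero_neq_numeral)
  then have "real (2 ^ nat (- i) * x) = real (2 ^ nat i * y)"
    using i by simp
  then show "eq_up_to_pow2 x y"
    unfolding eq_up_to_pow2_def by (metis of_nat_eq_iff)
next
  assume "eq_up_to_pow2 x y"
  then obtain a b where "2 ^ a * x = 2 ^ b * y"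
    unfolding eq_up_to_pow2_def by blast
  then have "2 ^ a * real x = 2 ^ b * real y"
    by (metis of_nat_mult of_nat_numeral of_nat_power)
  then have "real x = 2 powi (int b - int a) * real y"
    by (simp add: power_int_diff field_simps)
  then show "\<exists>i::int. real x = 2 powi i * real y" by blast
qed

lemma eq_up_to_pow2_mult_cancel_odd:
  assumes "eq_up_to_pow2 (x1 * x2) (y1 * y2)"
    and "coprime x1 y2" "coprime y1 x2" "odd x2" "odd y2"
  shows "eq_up_to_pow2 x1 y1 \<and> x2 = y2"
proof -
  obtain a b where ab: "2 ^ a * x1 * x2 = 2 ^ b * y1 * y2"
    using assms(1) unfolding eq_up_to_pow2_def by (auto simp: ac_simps)
  have "x2 dvd 2 ^ b * y1 * y2"
    by (metis ab dvd_triv_right)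
  moreover have "coprime x2 (2 ^ b * y1)"
    using assms(3,4) by (simp add: coprime_commute)
  ultimately have "x2 dvd y2"
    using coprime_dvd_mult_right_iff by blast
  have "y2 dvd 2 ^ a * x1 * x2"
    by (metis ab dvd_triv_right)
  moreover have "coprime y2 (2 ^ a * x1)"
    using assms(2,5) by (simp add: coprime_commute)
  ultimately have "y2 dvd x2"
    using coprime_dvd_mult_right_iff by blast
  with \<open>x2 dvd y2\<close> have "x2 = y2"
    by (rule dvd_antisym)
  with ab \<open>odd x2\<close> have "2 ^ a * x1 = 2 ^ b * y1"
    by (metis mult_right_cancel odd_pos less_not_refl2)
  with \<open>x2 = y2\<close> show ?thesis
    unfolding eq_up_to_pow2_def by blast
qed

lemma eq_up_to_pow2_coprime_factors:
  assumes "coprime m1 m2"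
    and "x1 dvd m1" "y1 dvd m1" "x2 dvd m2" "y2 dvd m2"
    and "eq_up_to_pow2 (x1 * x2) (y1 * y2)"
  shows "eq_up_to_pow2 x1 y1 \<and> eq_up_to_pow2 x2 y2"
proof -
  have coprime_cross: "coprime x1 y2" "coprime y1 x2" "coprime x2 y1" "coprime y2 x1"
    using assms(1-5) coprime_divisors coprime_commute by blast+
  have "odd m1 \<or> odd m2"
    using assms(1) by (metis coprime_common_divisor_nat even_numeral odd_one)
  then show ?thesis
  proof
    assume "odd m2"
    then have "odd x2" "odd y2"
      using assms(4,5) dvd_trans by blast+
    then show ?thesis
      using eq_up_to_pow2_mult_cancel_odd[OF assms(6) coprime_cross(1,2)] by simp
  next
    assume "odd m1"
    then have "odd x1" "odd y1"
      using assms(2,3) dvd_trans by blast+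
    moreover have "eq_up_to_pow2 (x2 * x1) (y2 * y1)"
      using assms(6) by (simp add: ac_simps)
    ultimately show ?thesis
      using eq_up_to_pow2_mult_cancel_odd[OF _ coprime_cross(3,4)] by simp
  qed
qed

lemma lpf_pos: "0 < lpf n"
proof (cases "n \<le> 1")
  case False
  then have "prime_factors n \<noteq> {}"
    by (simp add: prime_factorization_empty_iff)
  then have "Min (prime_factors n) \<in> prime_factors n"
    by (intro Min_in) simp_all
  then have "prime (Min (prime_factors n))"
    by (simp add: in_prime_factors_iff)
  then show ?thesis
    using False by (simp add: lpf_def prime_gt_0_nat)
qed (simp add: lpf_def)

lemma lpf_mult:
  assumes "1 < x" "1 < y"
  shows "lpf (x * y) = min (lpf x) (lpf y)"
proof -
  have nonempty: "prime_factors x \<noteq> {}" "prime_factors y \<noteq> {}"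
    using assms by (simp_all add: prime_factorization_empty_iff)
  have "1 < x * y"
    using assms by (metis less_1_mult)
  then have "lpf (x * y) = Min (prime_factors x \<union> prime_factors y)"
    using assms by (simp add: lpf_def prime_factors_product)
  also have "\<dots> = min (Min (prime_factors x)) (Min (prime_factors y))"
    using nonempty by (simp add: Min_Un)
  finally show ?thesis
    using assms by (simp add: lpf_def)
qed

lemma lpf_mult_cases:
  fixes a1 a2 b1 b2 :: nat
  assumes "0 < a1" "0 < a2" "a1 \<le> b1" "a2 \<le> b2"
  obtains "lpf (a1 * a2) = lpf a1" "lpf (b1 * b2) \<le> lpf b1"
    | "lpf (a1 * a2) = lpf a2" "lpf (b1 * b2) \<le> lpf b2"
proof -
  consider "a1 = 1" "b1 = 1" | "a2 = 1" "b2 = 1"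
    | "a1 = 1" "1 < b1" "1 < b2" | "a2 = 1" "1 < b1" "1 < b2"
    | "1 < a1" "1 < a2" "1 < b1" "1 < b2"
    using assms by linarith
  then show thesis
  proof cases
    case 1
    with that(2) show ?thesis by simp
  next
    case 2
    with that(1) show ?thesis by simp
  next
    case 3
    with that(2) show ?thesis by (simp add: lpf_mult)
  next
    case 4
    with that(1) show ?thesis by (simp add: lpf_mult)
  next
    case 5
    then have "lpf (a1 * a2) = min (lpf a1) (lpf a2)" "lpf (b1 * b2) = min (lpf b1) (lpf b2)"
      by (simp_all add: lpf_mult)
    with that show ?thesis
      by (cases "lpf a1 \<le> lpf a2") (simp_all add: min_absorb1 min_absorb2)
  qed
qed

lemma mult_lpf_cross_le:
  fixes a1 a2 b1 b2 :: nat
  assumes "0 < a1" "0 < a2" "a1 \<le> b1" "a2 \<le> b2"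
    and "a1 * lpf b1 \<le> b1 * lpf a1" "a2 * lpf b2 \<le> b2 * lpf a2"
  shows "a1 * a2 * lpf (b1 * b2) \<le> b1 * b2 * lpf (a1 * a2)"
  using assms(1-4)
proof (cases rule: lpf_mult_cases)
  case 1
  have "a1 * a2 * lpf (b1 * b2) \<le> (a1 * lpf b1) * a2"
    using 1 by simp
  also have "\<dots> \<le> (b1 * lpf a1) * b2"
    using assms(5,4) by (rule mult_le_mono)
  finally show ?thesis
    using 1 by (simp add: ac_simps)
next
  case 2
  have "a1 * a2 * lpf (b1 * b2) \<le> a1 * (a2 * lpf b2)"
    using 2 by simp
  also have "\<dots> \<le> b1 * (b2 * lpf a2)"
    using assms(3,6) by (rule mult_le_mono)
  finally show ?thesis
    using 2 by (simp add: ac_simps)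
qed

lemma ratio_le_min_lpf_iff:
  fixes a b :: nat
  assumes "0 < b"
  shows "real a / real b \<le> min 1 (real (lpf a) / real (lpf b)) \<longleftrightarrow>
    a \<le> b \<and> a * lpf b \<le> b * lpf a"
proof -
  have "real a / real b \<le> min 1 (real (lpf a) / real (lpf b)) \<longleftrightarrow>
      real a \<le> real b \<and> real a * real (lpf b) \<le> real b * real (lpf a)"
    using assms lpf_pos[of b] by (simp add: field_simps)
  then show ?thesis
    by (metis of_nat_le_iff of_nat_mult)
qed

definition reducing_at :: "nat \<Rightarrow> nat \<Rightarrow> nat \<Rightarrow> nat \<Rightarrow> bool" where
  "reducing_at n m d e \<longleftrightarrow> e dvd m \<and> e \<le> d \<and> m div e \<le> n div d \<and>
     m div e * lpf (n div d) \<le> n div d * lpf (m div e)"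

definition reflects_pow2 :: "(nat \<Rightarrow> nat) \<Rightarrow> nat \<Rightarrow> bool" where
  "reflects_pow2 f n \<longleftrightarrow>
     (\<forall>d\<in>divs n. \<forall>d'\<in>divs n. eq_up_to_pow2 (f d) (f d') \<longrightarrow> eq_up_to_pow2 d d')"

lemma reducing_iff:
  assumes "0 < n" "0 < m"
  shows "reducing f n m \<longleftrightarrow> (\<forall>d\<in>divs n. reducing_at n m d (f d)) \<and> reflects_pow2 f n"
proof -
  have "f d \<in> divs m \<and> f d \<le> d \<and>
      (real m / real (f d)) / (real n / real d)
        \<le> min 1 (real (lpf (m div f d)) / real (lpf (n div d)))
    \<longleftrightarrow> reducing_at n m d (f d)"
    if "d \<in> divs n" for d
  proof (cases "f d dvd m")
    case True
    have "0 < n div d"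
      using that dvd_div_eq_0_iff[of d n] assms(1) by (simp add: divs_def)
    with that True show ?thesis
      by (simp add: divs_def reducing_at_def real_of_nat_div ratio_le_min_lpf_iff[symmetric])
  qed (simp add: divs_def reducing_at_def)
  then show ?thesis
    unfolding reducing_def reflects_pow2_def eq_up_to_pow2_iff_powi
      ball_conj_distrib[symmetric] conj_assoc[symmetric]
    by (simp only: cong: ball_cong)
qed

lemma divs_mult_cases:
  assumes "d \<in> divs (n1 * n2)"
  obtains d1 d2 where "d1 \<in> divs n1" "d2 \<in> divs n2" "d = d1 * d2"
  using assms division_decomp[of d n1 n2] unfolding divs_def by auto

lemma reducing_at_mult:
  assumes "d1 dvd n1" "d2 dvd n2" "0 < m1" "0 < m2"
    and "reducing_at n1 m1 d1 e1" "reducing_at n2 m2 d2 e2"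
  shows "reducing_at (n1 * n2) (m1 * m2) (d1 * d2) (e1 * e2)"
proof -
  have e: "e1 dvd m1" "e1 \<le> d1" "e2 dvd m2" "e2 \<le> d2"
    using assms(5,6) unfolding reducing_at_def by blast+
  have "(m1 * m2) div (e1 * e2) = m1 div e1 * (m2 div e2)"
    using e by (simp add: div_mult_div_if_dvd)
  moreover have "(n1 * n2) div (d1 * d2) = n1 div d1 * (n2 div d2)"
    using assms(1,2) by (simp add: div_mult_div_if_dvd)
  moreover have "0 < m1 div e1" "0 < m2 div e2"
    using dvd_div_eq_0_iff[OF e(1)] dvd_div_eq_0_iff[OF e(3)] assms(3,4) by simp_all
  ultimately show ?thesis
    using assms(5,6) unfolding reducing_at_def
    by (simp add: mult_dvd_mono mult_le_mono mult_lpf_cross_le)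
qed

lemma reflects_pow2_mult:
  assumes "coprime m1 m2"
    and "\<forall>d\<in>divs n1. f1 d dvd m1" "\<forall>d\<in>divs n2. f2 d dvd m2"
    and "reflects_pow2 f1 n1" "reflects_pow2 f2 n2"
    and "\<forall>d1\<in>divs n1. \<forall>d2\<in>divs n2. g (d1 * d2) = f1 d1 * f2 d2"
  shows "reflects_pow2 g (n1 * n2)"
  unfolding reflects_pow2_def
proof (intro ballI impI)
  fix d d' assume "d \<in> divs (n1 * n2)" "d' \<in> divs (n1 * n2)" "eq_up_to_pow2 (g d) (g d')"
  obtain d1 d2 d1' d2' where d: "d1 \<in> divs n1" "d2 \<in> divs n2" "d = d1 * d2"
    and d': "d1' \<in> divs n1" "d2' \<in> divs n2" "d' = d1' * d2'"
    using divs_mult_cases \<open>d \<in> divs (n1 * n2)\<close> \<open>d' \<in> divs (n1 * n2)\<close> by metis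
  have "eq_up_to_pow2 (f1 d1 * f2 d2) (f1 d1' * f2 d2')"
    using \<open>eq_up_to_pow2 (g d) (g d')\<close> assms(6) d d' by simp
  then have "eq_up_to_pow2 (f1 d1) (f1 d1')" "eq_up_to_pow2 (f2 d2) (f2 d2')"
    using eq_up_to_pow2_coprime_factors[OF assms(1)] assms(2,3) d d' by blast+
  then show "eq_up_to_pow2 d d'"
    using assms(4,5) d d' unfolding reflects_pow2_def by (simp add: eq_up_to_pow2_mult)
qed

theorem lemma3p6:
  fixes n1 n2 m1 m2 :: nat and f1 f2 g :: "nat \<Rightarrow> nat"
  assumes "n1 > 0" "n2 > 0" "m1 > 0" "m2 > 0"
    and "coprime n1 n2" "coprime m1 m2"
    and "reducing f1 n1 m1" "reducing f2 n2 m2"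
    and "\<forall>d1\<in>divs n1. \<forall>d2\<in>divs n2. g (d1 * d2) = f1 d1 * f2 d2"
  shows "reducing g (n1 * n2) (m1 * m2)"
proof -
  obtain at1: "\<forall>d\<in>divs n1. reducing_at n1 m1 d (f1 d)" and "reflects_pow2 f1 n1"
    using assms(7) reducing_iff[OF assms(1,3)] by blast
  obtain at2: "\<forall>d\<in>divs n2. reducing_at n2 m2 d (f2 d)" and "reflects_pow2 f2 n2"
    using assms(8) reducing_iff[OF assms(2,4)] by blast
  have "reducing_at (n1 * n2) (m1 * m2) d (g d)" if d: "d \<in> divs (n1 * n2)" for d
  proof -
    obtain d1 d2 where "d1 \<in> divs n1" "d2 \<in> divs n2" "d = d1 * d2"
      using d by (rule divs_mult_cases)
    with at1 at2 assms(3,4,9) show ?thesis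
      unfolding divs_def by (simp add: reducing_at_mult)
  qed
  moreover have "reflects_pow2 g (n1 * n2)"
    using reflects_pow2_mult[OF assms(6) _ _ \<open>reflects_pow2 f1 n1\<close> \<open>reflects_pow2 f2 n2\<close> assms(9)]
      at1 at2 unfolding reducing_at_def by blast
  moreover have "0 < n1 * n2" "0 < m1 * m2"
    using assms(1-4) by simp_all
  ultimately show ?thesis
    using reducing_iff by blast
qed

end
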